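(* Let $k$ be a field of characteristic zero, $S=k[x,y]$, and let $I=(x^{\alpha},y^{\beta})$ and $J=(x^a,y^b)$ be ideals of $S$, where $a,b$ are positive integers, $0\le\alpha\le a$ and $0\le\beta\le b$. Then the graded $S$-module $I/J$ has the strong Lefschetz property.
   Context: $S$ is standard graded. A finite graded $S$-module $M=\bigoplus_i M_i$ has the strong Lefschetz property if there exists a linear form $\ell\in S_1$ such that the multiplication map $\times\ell^d\colon M_i\to M_{i+d}$ has maximal rank (is injective or surjective) for all $d>0$ and all $i$. *)

theory Defs
  imports "HOL-Computational_Algebra.Polynomial"
begin

text \<open>The bivariate polynomial ring S = k[x,y] is represented as ('k poly) poly:
  the outer variable is y, the inner variable is x, so the coefficient of
  x^i y^j in p is coeff (coeff p j) i.\<close>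

definition var_x :: "'k::comm_ring_1 poly poly" where
  "var_x = [: [:0, 1:] :]"

definition var_y :: "'k::comm_ring_1 poly poly" where
  "var_y = [: 0, 1 :]"

definition homog :: "nat \<Rightarrow> 'k::comm_ring_1 poly poly \<Rightarrow> bool" where
  "homog d p \<longleftrightarrow> (\<forall>i j. coeff (coeff p j) i \<noteq> 0 \<longrightarrow> i + j = d)"

definition ideal2 :: "'k::comm_ring_1 poly poly \<Rightarrow> 'k poly poly \<Rightarrow> 'k poly poly set" where
  "ideal2 f g = {p * f + q * g | p q. True}"

text \<open>Strong Lefschetz property of the graded module I/J (J \<subseteq> I homogeneous ideals),
  whose degree-i component is I_i / J_i.\<close>
definition lef_inj :: "'k::comm_ring_1 poly poly set \<Rightarrow> 'k poly poly set \<Rightarrow> 'k poly poly \<Rightarrow> nat \<Rightarrow> nat \<Rightarrow> bool" where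
  "lef_inj I J l d i \<longleftrightarrow> (\<forall>f\<in>I. homog i f \<longrightarrow> l ^ d * f \<in> J \<longrightarrow> f \<in> J)"

definition lef_surj :: "'k::comm_ring_1 poly poly set \<Rightarrow> 'k poly poly set \<Rightarrow> 'k poly poly \<Rightarrow> nat \<Rightarrow> nat \<Rightarrow> bool" where
  "lef_surj I J l d i \<longleftrightarrow>
     (\<forall>g\<in>I. homog (i + d) g \<longrightarrow> (\<exists>f\<in>I. homog i f \<and> g - l ^ d * f \<in> J))"

definition quot_has_SLP :: "'k::comm_ring_1 poly poly set \<Rightarrow> 'k poly poly set \<Rightarrow> bool" where
  "quot_has_SLP I J \<longleftrightarrow>
     (\<exists>l. homog 1 l \<and> (\<forall>d>0. \<forall>i. lef_inj I J l d i \<or> lef_surj I J l d i))"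

end

theory Submission
  imports Defs "Jordan_Normal_Form.Determinant"
begin

text \<open>The monomials x^i y^(n-i) that lie in I = (x^\<alpha>, y^\<beta>) but not in J = (x^a, y^b) form a
  basis of the degree n part of I/J; let X_n be the set of their exponents i. Multiplication by
  l^d, l = x + y, sends x^s y^(n-s) to the sum of C(d, i-s) x^i y^(n+d-i), so in these bases it is
  the matrix (C(d, i-s)) with rows i in X_(n+d) and columns s in X_n. Each X_n is an interval with
  at most one gap, and comparing X_n with X_(n+d) yields an increasing injection of one into the
  other that moves every element by at most d. The square submatrix it selects has rows
  p_1 < ... < p_m and columns s_1 < ... < s_m with s_k <= p_k <= s_k + d, and its determinant is
  a positive integer: by Pascal's rule it is a sum of such minors of order d - 1, all of which
  are nonnegative. So in characteristic zero multiplication by l^d has maximal rank.\<close>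

text \<open>Shift the elements below \<alpha> by the growth c_1 of the lower end and the others by the
  growth c_2 of the upper end; if this is not an increasing map into Y, the reverse shift maps
  Y increasingly into X.\<close>

lemma interval_with_gap_matching:
  fixes L U c\<^sub>1 c\<^sub>2 d \<alpha> \<beta> n :: nat
  defines "X \<equiv> {i. L \<le> i \<and> i < U \<and> (\<alpha> \<le> i \<or> i + \<beta> \<le> n)}"
    and "Y \<equiv> {i. L + c\<^sub>1 \<le> i \<and> i < U + c\<^sub>2 \<and> (\<alpha> \<le> i \<or> i + \<beta> \<le> n + d)}"
  assumes "c\<^sub>1 \<le> d" and "c\<^sub>2 \<le> d"
  shows "(\<exists>\<phi>. strict_mono_on X \<phi> \<and> \<phi> ` X \<subseteq> Y \<and> (\<forall>x\<in>X. x \<le> \<phi> x \<and> \<phi> x \<le> x + d))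
       \<or> (\<exists>\<psi>. strict_mono_on Y \<psi> \<and> \<psi> ` Y \<subseteq> X \<and> (\<forall>y\<in>Y. \<psi> y \<le> y \<and> y \<le> \<psi> y + d))"
proof -
  define \<phi> where "\<phi> x = (if x < \<alpha> then x + c\<^sub>1 else x + c\<^sub>2)" for x
  define \<psi> where "\<psi> y = (if \<alpha> + c\<^sub>2 \<le> y then y - c\<^sub>2 else y - c\<^sub>1)" for y
  have X: "x \<in> X \<longleftrightarrow> L \<le> x \<and> x < U \<and> (\<alpha> \<le> x \<or> x + \<beta> \<le> n)" for x
    by (simp add: X_def)
  have Y: "y \<in> Y \<longleftrightarrow> L + c\<^sub>1 \<le> y \<and> y < U + c\<^sub>2 \<and> (\<alpha> \<le> y \<or> y + \<beta> \<le> n + d)" for y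
    by (simp add: Y_def)
  have \<phi>_bounds: "\<forall>x\<in>X. x \<le> \<phi> x \<and> \<phi> x \<le> x + d"
    using assms(3,4) by (simp add: \<phi>_def)
  have \<psi>_bounds: "\<forall>y\<in>Y. \<psi> y \<le> y \<and> y \<le> \<psi> y + d"
    using assms(3,4) by (auto simp: \<psi>_def Y)
  have \<psi>_good: "strict_mono_on Y \<psi> \<and> \<psi> ` Y \<subseteq> X"
    if "x \<in> X" and "x' \<in> X" and "\<phi> x \<notin> Y \<or> (x < x' \<and> \<phi> x' \<le> \<phi> x)" for x x'
  proof (intro conjI strict_mono_onI image_subsetI)
    show "\<psi> y < \<psi> y'" if "y \<in> Y" "y' \<in> Y" "y < y'" for y y'
      using \<open>\<phi> x \<notin> Y \<or> (x < x' \<and> \<phi> x' \<le> \<phi> x)\<close>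
    proof
      assume "\<phi> x \<notin> Y"
      with that \<open>x \<in> X\<close> assms(3,4) show ?thesis
        unfolding \<psi>_def \<phi>_def X Y by (auto split: if_splits)
    next
      assume "x < x' \<and> \<phi> x' \<le> \<phi> x"
      with that \<open>x \<in> X\<close> \<open>x' \<in> X\<close> assms(3,4) show ?thesis
        unfolding \<psi>_def \<phi>_def X Y by (auto split: if_splits)
    qed
    show "\<psi> y \<in> X" if "y \<in> Y" for y
      using \<open>\<phi> x \<notin> Y \<or> (x < x' \<and> \<phi> x' \<le> \<phi> x)\<close>
    proof
      assume "\<phi> x \<notin> Y"
      with that \<open>x \<in> X\<close> assms(3,4) show ?thesis
        unfolding \<psi>_def \<phi>_def X Y by (auto split: if_splits)
    next
      assume "x < x' \<and> \<phi> x' \<le> \<phi> x"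
      with that \<open>x \<in> X\<close> \<open>x' \<in> X\<close> assms(3,4) show ?thesis
        unfolding \<psi>_def \<phi>_def X Y by (auto split: if_splits)
    qed
  qed
  show ?thesis
  proof (cases "strict_mono_on X \<phi> \<and> \<phi> ` X \<subseteq> Y")
    case True
    with \<phi>_bounds show ?thesis by blast
  next
    case False
    then obtain x x' where "x \<in> X" "x' \<in> X" "\<phi> x \<notin> Y \<or> (x < x' \<and> \<phi> x' \<le> \<phi> x)"
      unfolding strict_mono_on_def by (auto simp: not_less)
    with \<psi>_good \<psi>_bounds show ?thesis by blast
  qed
qed

definition coeff_xy :: "'k::comm_ring_1 poly poly \<Rightarrow> nat \<Rightarrow> nat \<Rightarrow> 'k" where
  "coeff_xy f i j = coeff (coeff f j) i"

lemma poly_poly_eqI: "(\<And>i j. coeff_xy f i j = coeff_xy g i j) \<Longrightarrow> f = g"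
  unfolding coeff_xy_def by (intro poly_eqI) blast

lemma coeff_xy_add [simp]: "coeff_xy (f + g) i j = coeff_xy f i j + coeff_xy g i j"
  and coeff_xy_diff [simp]: "coeff_xy (f - g) i j = coeff_xy f i j - coeff_xy g i j"
  and coeff_xy_sum: "coeff_xy (\<Sum>x\<in>A. F x) i j = (\<Sum>x\<in>A. coeff_xy (F x) i j)"
  and coeff_xy_monom [simp]: "coeff_xy (monom (monom c k) l) i j = (if i = k \<and> j = l then c else 0)"
  by (auto simp: coeff_xy_def coeff_sum)

lemma var_y_power: "var_y ^ k = monom 1 k"
  by (simp add: var_y_def monom_altdef)

lemma var_x_power: "var_x ^ k = monom (monom 1 k) 0"
proof -
  have var_x: "var_x = monom (monom 1 1) 0"
    by (simp add: var_x_def monom_0 monom_Suc)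
  show ?thesis
    unfolding var_x monom_power by simp
qed

lemma coeff_xy_var_x_power_mult:
  "coeff_xy (var_x ^ k * f) i j = (if k \<le> i then coeff_xy f (i - k) j else 0)"
  by (simp add: coeff_xy_def var_x_power monom_0 coeff_monom_mult)

lemma coeff_xy_var_y_power_mult:
  "coeff_xy (var_y ^ k * f) i j = (if k \<le> j then coeff_xy f i (j - k) else 0)"
  by (simp add: coeff_xy_def var_y_power coeff_monom_mult)

lemma poly_poly_as_sum_of_monoms:
  "(\<Sum>j\<le>degree f. \<Sum>i\<le>degree (coeff f j). monom (monom (coeff_xy f i j) i) j) = f"
proof -
  have "(\<Sum>i\<le>degree (coeff f j). monom (monom (coeff_xy f i j) i) j) = monom (coeff f j) j" for j
    by (simp add: coeff_xy_def poly_as_sum_of_monoms flip: monom_sum)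
  then show ?thesis by (simp add: poly_as_sum_of_monoms)
qed

lemma ideal2_generators: "r * f \<in> ideal2 f g" "r * g \<in> ideal2 f g"
proof -
  have "r * f = r * f + 0 * g" and "r * g = 0 * f + r * g"
    by simp_all
  then show "r * f \<in> ideal2 f g" "r * g \<in> ideal2 f g"
    unfolding ideal2_def by blast+
qed

lemma ideal2_add:
  assumes "u \<in> ideal2 f g" and "v \<in> ideal2 f g"
  shows "u + v \<in> ideal2 f g"
proof -
  from assms obtain p q p' q' where "u = p * f + q * g" and "v = p' * f + q' * g"
    unfolding ideal2_def by blast
  then have "u + v = (p + p') * f + (q + q') * g"
    by (simp add: algebra_simps)
  then show ?thesis unfolding ideal2_def by blast
qed

lemma ideal2_mult_left:
  assumes "u \<in> ideal2 f g"
  shows "r * u \<in> ideal2 f g"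
proof -
  from assms obtain p q where "u = p * f + q * g"
    unfolding ideal2_def by blast
  then have "r * u = (r * p) * f + (r * q) * g"
    by (simp add: algebra_simps)
  then show ?thesis unfolding ideal2_def by blast
qed

lemma ideal2_diff: "u \<in> ideal2 f g \<Longrightarrow> v \<in> ideal2 f g \<Longrightarrow> u - v \<in> ideal2 f g"
  using ideal2_add[of u f g "(- 1) * v"] ideal2_mult_left[of v f g "- 1"] by simp

lemma ideal2_sum:
  "(\<And>x. x \<in> A \<Longrightarrow> F x \<in> ideal2 f g) \<Longrightarrow> (\<Sum>x\<in>A. F x) \<in> ideal2 f g"
proof (induction A rule: infinite_finite_induct)
  case (insert x A)
  then show ?case by (simp add: ideal2_add)
qed (use ideal2_generators(1)[of 0] in simp_all)

abbreviation xy_ideal :: "nat \<Rightarrow> nat \<Rightarrow> 'k::comm_ring_1 poly poly set" where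
  "xy_ideal A B \<equiv> ideal2 (var_x ^ A) (var_y ^ B)"

lemma mem_xy_ideal_iff:
  "f \<in> xy_ideal A B \<longleftrightarrow> (\<forall>i j. coeff_xy f i j \<noteq> 0 \<longrightarrow> A \<le> i \<or> B \<le> j)"
proof
  assume "f \<in> xy_ideal A B"
  then obtain p q where "f = var_x ^ A * p + var_y ^ B * q"
    unfolding ideal2_def by (auto simp: mult.commute)
  then show "\<forall>i j. coeff_xy f i j \<noteq> 0 \<longrightarrow> A \<le> i \<or> B \<le> j"
    by (simp add: coeff_xy_var_x_power_mult coeff_xy_var_y_power_mult)
next
  assume support: "\<forall>i j. coeff_xy f i j \<noteq> 0 \<longrightarrow> A \<le> i \<or> B \<le> j"
  have "monom (monom (coeff_xy f i j) i) j \<in> xy_ideal A B" for i j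
  proof (cases "coeff_xy f i j = 0")
    case True
    then show ?thesis
      using ideal2_generators(1)[of 0] by simp
  next
    case False
    with support have "A \<le> i \<or> B \<le> j" by blast
    then show ?thesis
    proof
      assume "A \<le> i"
      then have "monom (monom (coeff_xy f i j) i) j = monom (monom (coeff_xy f i j) (i - A)) j * var_x ^ A"
        by (simp add: var_x_power mult_monom)
      then show ?thesis by (simp add: ideal2_generators)
    next
      assume "B \<le> j"
      then have "monom (monom (coeff_xy f i j) i) j = monom (monom (coeff_xy f i j) i) (j - B) * var_y ^ B"
        by (simp add: var_y_power mult_monom flip: monom_0)
      then show ?thesis by (simp add: ideal2_generators)
    qed
  qed
  then have "(\<Sum>j\<le>degree f. \<Sum>i\<le>degree (coeff f j). monom (monom (coeff_xy f i j) i) j) \<in> xy_ideal A B"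
    by (intro ideal2_sum)
  then show "f \<in> xy_ideal A B"
    by (simp only: poly_poly_as_sum_of_monoms)
qed

lemma homog_iff_coeff_xy: "homog n f \<longleftrightarrow> (\<forall>i j. coeff_xy f i j \<noteq> 0 \<longrightarrow> i + j = n)"
  by (simp add: homog_def coeff_xy_def)

lemma homog_monom: "i + j = n \<Longrightarrow> homog n (monom (monom c i) j)"
  by (simp add: homog_iff_coeff_xy)

lemma homog_diff: "homog n f \<Longrightarrow> homog n g \<Longrightarrow> homog n (f - g)"
  unfolding homog_iff_coeff_xy coeff_xy_diff by (metis diff_zero)

lemma homog_sum: "(\<And>x. x \<in> A \<Longrightarrow> homog n (F x)) \<Longrightarrow> homog n (\<Sum>x\<in>A. F x)"
  unfolding homog_iff_coeff_xy coeff_xy_sum by (metis (mono_tags, lifting) sum.neutral)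

lemma homog_as_sum_of_monoms:
  assumes "homog n f"
  shows "(\<Sum>i\<le>n. monom (monom (coeff_xy f i (n - i)) i) (n - i)) = f"
proof (rule poly_poly_eqI)
  fix i j
  have "coeff_xy (\<Sum>k\<le>n. monom (monom (coeff_xy f k (n - k)) k) (n - k)) i j
      = (\<Sum>k\<le>n. if k = i then (if j = n - i then coeff_xy f i j else 0) else 0)"
    unfolding coeff_xy_sum by (intro sum.cong) auto
  also have "\<dots> = coeff_xy f i j"
  proof (cases "coeff_xy f i j = 0")
    case False
    then have "i + j = n" using assms by (simp add: homog_iff_coeff_xy)
    then show ?thesis by auto
  qed auto
  finally show "coeff_xy (\<Sum>k\<le>n. monom (monom (coeff_xy f k (n - k)) k) (n - k)) i j = coeff_xy f i j" .
qed

lemma homog_mult: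
  assumes "homog m f" and "homog n g"
  shows "homog (m + n) (f * g)"
proof -
  define F where "F i = monom (monom (coeff_xy f i (m - i)) i) (m - i)" for i
  define G where "G k = monom (monom (coeff_xy g k (n - k)) k) (n - k)" for k
  have "f * g = (\<Sum>i\<le>m. F i) * (\<Sum>k\<le>n. G k)"
    using homog_as_sum_of_monoms[OF assms(1)] homog_as_sum_of_monoms[OF assms(2)]
    by (simp add: F_def G_def)
  also have "\<dots> = (\<Sum>i\<le>m. \<Sum>k\<le>n. F i * G k)"
    by (simp add: sum_product)
  also have "homog (m + n) \<dots>"
    by (intro homog_sum) (auto simp: F_def G_def mult_monom intro!: homog_monom)
  finally show ?thesis .
qed

lemma lin_power_as_sum:
  "(var_x + var_y) ^ d = (\<Sum>k\<le>d. monom (monom (of_nat (d choose k)) k) (d - k))"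
  by (simp add: binomial_ring var_x_power var_y_power of_nat_monom mult_monom flip: monom_0)

lemma homog_lin_power: "homog d ((var_x + var_y) ^ d)"
  unfolding lin_power_as_sum by (intro homog_sum homog_monom) simp

lemma homog_lin_power_mult: "homog n f \<Longrightarrow> homog (n + d) ((var_x + var_y) ^ d * f)"
  by (metis add.commute homog_lin_power homog_mult)

definition binomial_entry :: "nat \<Rightarrow> nat \<Rightarrow> nat \<Rightarrow> nat" where
  "binomial_entry d i s = (if s \<le> i then d choose (i - s) else 0)"

lemma coeff_xy_lin_power_mult_monom:
  assumes "s \<le> n"
  shows "coeff_xy ((var_x + var_y) ^ d * monom (monom c s) (n - s)) i (n + d - i)
       = of_nat (binomial_entry d i s) * c"
proof -
  have "coeff_xy ((var_x + var_y) ^ d * monom (monom c s) (n - s)) i (n + d - i)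
      = (\<Sum>k\<le>d. if k = i - s \<and> s \<le> i then of_nat (d choose k) * c else 0)"
    unfolding lin_power_as_sum sum_distrib_right coeff_xy_sum
    using assms by (intro sum.cong) (auto simp: mult_monom)
  also have "\<dots> = of_nat (binomial_entry d i s) * c"
    by (auto simp: binomial_entry_def binomial_eq_0)
  finally show ?thesis .
qed

lemma coeff_xy_lin_power_mult:
  assumes "homog n f"
  shows "coeff_xy ((var_x + var_y) ^ d * f) i (n + d - i)
       = (\<Sum>s\<le>n. of_nat (binomial_entry d i s) * coeff_xy f s (n - s))"
proof -
  have "(var_x + var_y) ^ d * f
      = (\<Sum>s\<le>n. (var_x + var_y) ^ d * monom (monom (coeff_xy f s (n - s)) s) (n - s))"
    by (simp add: homog_as_sum_of_monoms[OF assms] flip: sum_distrib_left)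
  then show ?thesis
    by (simp add: coeff_xy_sum coeff_xy_lin_power_mult_monom)
qed

definition basis_exps :: "nat \<Rightarrow> nat \<Rightarrow> nat \<Rightarrow> nat \<Rightarrow> nat \<Rightarrow> nat set" where
  "basis_exps \<alpha> \<beta> a b n = {i. i \<le> n \<and> (\<alpha> \<le> i \<or> \<beta> \<le> n - i) \<and> \<not> (a \<le> i \<or> b \<le> n - i)}"

lemma finite_basis_exps: "finite (basis_exps \<alpha> \<beta> a b n)"
  by (rule finite_subset[of _ "{..n}"]) (auto simp: basis_exps_def)

lemma basis_exps_eq_interval:
  "basis_exps \<alpha> \<beta> a b n = {i. n + 1 - b \<le> i \<and> i < min a (n + 1) \<and> (\<alpha> \<le> i \<or> i + \<beta> \<le> n)}"
  by (auto simp: basis_exps_def)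

lemma basis_exps_matching:
  fixes \<alpha> \<beta> a b n d :: nat
  defines "X \<equiv> basis_exps \<alpha> \<beta> a b n" and "Y \<equiv> basis_exps \<alpha> \<beta> a b (n + d)"
  shows "(\<exists>\<phi>. strict_mono_on X \<phi> \<and> \<phi> ` X \<subseteq> Y \<and> (\<forall>x\<in>X. x \<le> \<phi> x \<and> \<phi> x \<le> x + d))
       \<or> (\<exists>\<psi>. strict_mono_on Y \<psi> \<and> \<psi> ` Y \<subseteq> X \<and> (\<forall>y\<in>Y. \<psi> y \<le> y \<and> y \<le> \<psi> y + d))"
proof -
  define c\<^sub>1 where "c\<^sub>1 = (n + d + 1 - b) - (n + 1 - b)"
  define c\<^sub>2 where "c\<^sub>2 = min a (n + d + 1) - min a (n + 1)"
  have "(n + 1 - b) + c\<^sub>1 = n + d + 1 - b" and "min a (n + 1) + c\<^sub>2 = min a (n + d + 1)"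
    unfolding c\<^sub>1_def c\<^sub>2_def by auto
  then have "Y = {i. (n + 1 - b) + c\<^sub>1 \<le> i \<and> i < min a (n + 1) + c\<^sub>2 \<and> (\<alpha> \<le> i \<or> i + \<beta> \<le> n + d)}"
    unfolding Y_def basis_exps_eq_interval by (simp only: add.assoc)
  moreover have "c\<^sub>1 \<le> d" and "c\<^sub>2 \<le> d"
    unfolding c\<^sub>1_def c\<^sub>2_def by auto
  ultimately show ?thesis
    unfolding X_def basis_exps_eq_interval
    using interval_with_gap_matching[where L = "n + 1 - b" and U = "min a (n + 1)"] by simp
qed

lemma homog_mem_xy_ideal_iff:
  assumes "homog n f" and "f \<in> xy_ideal \<alpha> \<beta>"
  shows "f \<in> xy_ideal a b \<longleftrightarrow> (\<forall>i\<in>basis_exps \<alpha> \<beta> a b n. coeff_xy f i (n - i) = 0)"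
proof
  show "f \<in> xy_ideal a b \<Longrightarrow> \<forall>i\<in>basis_exps \<alpha> \<beta> a b n. coeff_xy f i (n - i) = 0"
    by (auto simp: mem_xy_ideal_iff basis_exps_def)
next
  assume basis_zero: "\<forall>i\<in>basis_exps \<alpha> \<beta> a b n. coeff_xy f i (n - i) = 0"
  show "f \<in> xy_ideal a b"
    unfolding mem_xy_ideal_iff
  proof (intro allI impI)
    fix i j
    assume "coeff_xy f i j \<noteq> 0"
    then have "i + j = n" and "\<alpha> \<le> i \<or> \<beta> \<le> j"
      using assms by (auto simp: homog_iff_coeff_xy mem_xy_ideal_iff)
    show "a \<le> i \<or> b \<le> j"
    proof (rule ccontr)
      assume "\<not> (a \<le> i \<or> b \<le> j)"
      with \<open>i + j = n\<close> \<open>\<alpha> \<le> i \<or> \<beta> \<le> j\<close> have "i \<in> basis_exps \<alpha> \<beta> a b n"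
        by (auto simp: basis_exps_def)
      with basis_zero \<open>i + j = n\<close> \<open>coeff_xy f i j \<noteq> 0\<close> show False
        by auto
    qed
  qed
qed

lemma coeff_xy_lin_power_mult_basis:
  assumes "homog n f" and "f \<in> xy_ideal \<alpha> \<beta>" and "i \<in> basis_exps \<alpha> \<beta> a b (n + d)"
  shows "coeff_xy ((var_x + var_y) ^ d * f) i (n + d - i)
       = (\<Sum>s\<in>basis_exps \<alpha> \<beta> a b n. of_nat (binomial_entry d i s) * coeff_xy f s (n - s))"
proof -
  have "of_nat (binomial_entry d i s) * coeff_xy f s (n - s) = 0"
    if "s \<le> n" and "s \<notin> basis_exps \<alpha> \<beta> a b n" for s
  proof (rule ccontr)
    assume "of_nat (binomial_entry d i s) * coeff_xy f s (n - s) \<noteq> 0"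
    then have "binomial_entry d i s \<noteq> 0" and "coeff_xy f s (n - s) \<noteq> 0"
      by (metis mult_zero_left of_nat_0, metis mult_zero_right)
    then have "s \<le> i" "i \<le> s + d" and "coeff_xy f s (n - s) \<noteq> 0"
      by (auto simp: binomial_entry_def split: if_splits)
    then show False
      using that assms(2,3) by (auto simp: basis_exps_def mem_xy_ideal_iff)
  qed
  then show ?thesis
    unfolding coeff_xy_lin_power_mult[OF assms(1)]
    by (intro sum.mono_neutral_right) (auto simp: basis_exps_def)
qed

lemma det_mat_eq_sum_perms:
  "det (mat n n F) = (\<Sum>\<sigma> | \<sigma> permutes {0..<n}. signof \<sigma> * (\<Prod>i = 0..<n. F (i, \<sigma> i)))"
  unfolding det_def'[OF mat_carrier]
proof (intro sum.cong refl prod.cong arg_cong2[where f = "(*)"])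
  fix \<sigma> i assume "\<sigma> \<in> {\<sigma>. \<sigma> permutes {0..<n}}" and "i \<in> {0..<n}"
  then have "i < n" and "\<sigma> i < n" by (auto dest: permutes_in_image)
  then show "mat n n F $$ (i, \<sigma> i) = F (i, \<sigma> i)" by simp
qed

lemma det_zero_row:
  assumes "A \<in> carrier_mat n n" and "k < n" and "\<And>j. j < n \<Longrightarrow> A $$ (k, j) = 0"
  shows "det A = 0"
  unfolding det_def'[OF assms(1)]
proof (intro sum.neutral ballI)
  fix \<sigma> assume "\<sigma> \<in> {\<sigma>. \<sigma> permutes {0..<n}}"
  then have "\<sigma> k < n" using assms(2) by (auto dest: permutes_in_image)
  then have "(\<Prod>i = 0..<n. A $$ (i, \<sigma> i)) = 0"
    using assms(2,3) by (intro prod_zero bexI[of _ k]) auto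
  then show "signof \<sigma> * (\<Prod>i = 0..<n. A $$ (i, \<sigma> i)) = 0" by simp
qed

lemma det_zero_col:
  assumes "A \<in> carrier_mat n n" and "k < n" and "\<And>i. i < n \<Longrightarrow> A $$ (i, k) = 0"
  shows "det A = 0"
  using det_zero_row[of "transpose_mat A" n k] det_transpose[OF assms(1)] assms by simp

lemma det_mat_add_rowwise:
  "det (mat n n (\<lambda>(i, j). f i j + g i j) :: 'a::comm_ring_1 mat)
     = (\<Sum>R\<in>Pow {0..<n}. det (mat n n (\<lambda>(i, j). if i \<in> R then f i j else g i j)))"
proof -
  let ?perms = "{\<sigma>. \<sigma> permutes {0..<n}}"
  have "det (mat n n (\<lambda>(i, j). f i j + g i j))
      = (\<Sum>\<sigma>\<in>?perms. signof \<sigma> * (\<Prod>i = 0..<n. f i (\<sigma> i) + g i (\<sigma> i)))"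
    by (simp add: det_mat_eq_sum_perms)
  also have "\<dots> = (\<Sum>\<sigma>\<in>?perms. \<Sum>R\<in>Pow {0..<n}.
      signof \<sigma> * (\<Prod>i = 0..<n. if i \<in> R then f i (\<sigma> i) else g i (\<sigma> i)))"
    unfolding prod_add[OF finite_atLeastLessThan] sum_distrib_left
    by (intro sum.cong refl) (auto simp: prod.If_cases Diff_eq Int_commute Int_absorb2)
  also have "\<dots> = (\<Sum>R\<in>Pow {0..<n}. det (mat n n (\<lambda>(i, j). if i \<in> R then f i j else g i j)))"
    by (subst sum.swap) (simp add: det_mat_eq_sum_perms)
  finally show ?thesis .
qed

definition binomial_minor :: "nat \<Rightarrow> nat \<Rightarrow> (nat \<Rightarrow> nat) \<Rightarrow> (nat \<Rightarrow> nat) \<Rightarrow> 'a::semiring_1 mat" where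
  "binomial_minor d m p s = mat m m (\<lambda>(r, c). of_nat (binomial_entry d (p r) (s c)))"

lemma binomial_entry_0: "binomial_entry 0 i s = (if s = i then 1 else 0)"
  by (auto simp: binomial_entry_def)

lemma binomial_entry_Suc:
  "binomial_entry (Suc d) i s = binomial_entry d i s + (if 0 < i then binomial_entry d (i - 1) s else 0)"
proof (cases "s < i")
  case True
  then have "i - s = Suc (i - 1 - s)" by simp
  with True show ?thesis by (simp add: binomial_entry_def)
qed (auto simp: binomial_entry_def)

lemma binomial_minor_0_diagonal:
  assumes "strict_mono_on {..<m} s" and "\<forall>r<m. p r = s r"
  shows "binomial_minor 0 m p s = 1\<^sub>m m"
  using assms strict_mono_on_eqD[OF assms(1)]
  by (intro eq_matI) (auto simp: binomial_minor_def binomial_entry_0)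

lemma det_binomial_minor_0_off_diagonal:
  assumes p: "strict_mono_on {..<m} p" and s: "strict_mono_on {..<m} s" and "\<exists>r<m. p r \<noteq> s r"
  shows "det (binomial_minor 0 m p s :: 'a::comm_ring_1 mat) = 0"
proof -
  obtain r where r: "r < m" "p r \<noteq> s r" and agree: "\<And>c. c < r \<Longrightarrow> p c = s c"
    using assms(3) exists_least_iff[of "\<lambda>r. r < m \<and> p r \<noteq> s r"] by (metis order.strict_trans)
  have carrier: "binomial_minor 0 m p s \<in> carrier_mat m m"
    by (simp add: binomial_minor_def)
  show ?thesis
  proof (cases "p r < s r")
    case True
    have "s c \<noteq> p r" if "c < m" for c
      using that r agree strict_mono_onD[OF p, of c r] strict_mono_on_leD[OF s, of r c] True
      by (cases "c < r") auto
    then show ?thesis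
      using r(1) by (intro det_zero_row[OF carrier r(1)]) (simp add: binomial_minor_def binomial_entry_0)
  next
    case False
    with r have "s r < p r" by simp
    have "s r \<noteq> p c" if "c < m" for c
      using that r agree strict_mono_onD[OF s, of c r] strict_mono_on_leD[OF p, of r c] \<open>s r < p r\<close>
      by (cases "c < r") auto
    then show ?thesis
      using r(1) by (intro det_zero_col[OF carrier r(1)]) (simp add: binomial_minor_def binomial_entry_0)
  qed
qed

text \<open>By Pascal's rule each row of a binomial minor of order Suc d is the sum of two rows of
  order d; the rows in R take the first summand, the others the second.\<close>

definition pascal_term :: "nat \<Rightarrow> nat \<Rightarrow> (nat \<Rightarrow> nat) \<Rightarrow> (nat \<Rightarrow> nat) \<Rightarrow> nat set \<Rightarrow> 'a::semiring_1 mat" where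
  "pascal_term d m p s R = mat m m (\<lambda>(r, c).
     if r \<in> R then of_nat (binomial_entry d (p r) (s c))
     else if 0 < p r then of_nat (binomial_entry d (p r - 1) (s c)) else 0)"

lemma det_binomial_minor_Suc:
  "det (binomial_minor (Suc d) m p s :: 'a::comm_ring_1 mat) = (\<Sum>R\<in>Pow {0..<m}. det (pascal_term d m p s R))"
proof -
  define f :: "nat \<Rightarrow> nat \<Rightarrow> 'a" where "f r c = of_nat (binomial_entry d (p r) (s c))" for r c
  define g :: "nat \<Rightarrow> nat \<Rightarrow> 'a"
    where "g r c = (if 0 < p r then of_nat (binomial_entry d (p r - 1) (s c)) else 0)" for r c
  have "(\<lambda>(r, c). of_nat (binomial_entry (Suc d) (p r) (s c))) = (\<lambda>(r, c). f r c + g r c)"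
    by (auto simp: binomial_entry_Suc f_def g_def)
  then have "binomial_minor (Suc d) m p s = mat m m (\<lambda>(r, c). f r c + g r c)"
    by (simp add: binomial_minor_def)
  moreover have "pascal_term d m p s R = mat m m (\<lambda>(r, c). if r \<in> R then f r c else g r c)" for R
    unfolding pascal_term_def f_def g_def by simp
  ultimately show ?thesis
    by (simp add: det_mat_add_rowwise)
qed

lemma det_pascal_term_nonneg:
  assumes IH: "\<And>q. strict_mono_on {..<m} q \<Longrightarrow> 0 \<le> det (binomial_minor d m q s :: int mat)"
    and p: "strict_mono_on {..<m} p"
  shows "0 \<le> det (pascal_term d m p s R :: int mat)"
proof (cases "\<exists>r<m. r \<notin> R \<and> p r = 0")
  case True
  then obtain r where "r < m" "r \<notin> R" "p r = 0" by blast
  then have "det (pascal_term d m p s R :: int mat) = 0"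
    by (intro det_zero_row[of _ m r]) (auto simp: pascal_term_def)
  then show ?thesis by simp
next
  case False
  define q where "q r = (if r \<in> R then p r else p r - 1)" for r
  have term_eq: "pascal_term d m p s R = (binomial_minor d m q s :: int mat)"
    using False by (intro eq_matI) (auto simp: pascal_term_def binomial_minor_def q_def)
  show ?thesis
  proof (cases "strict_mono_on {..<m} q")
    case True
    with IH term_eq show ?thesis by simp
  next
    case False
    then obtain i j where ij: "i < j" "j < m" and "q j \<le> q i"
      unfolding strict_mono_on_def by (auto simp: not_less)
    moreover have "p i < p j"
      using ij by (intro strict_mono_onD[OF p]) auto
    ultimately have "q i = q j"
      unfolding q_def by (auto split: if_splits)
    then have "det (binomial_minor d m q s :: int mat) = 0"
      using ij by (intro det_identical_rows[of _ m i j]) (auto simp: binomial_minor_def intro!: eq_vecI)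
    then show ?thesis
      unfolding term_eq by simp
  qed
qed

text \<open>Nonnegativity for all increasing row indices p is what drives the induction: it makes
  every term of the Pascal expansion of order Suc d nonnegative.\<close>

lemma det_binomial_minor_nonneg_pos:
  assumes "strict_mono_on {..<m} p" and s: "strict_mono_on {..<m} s"
  shows "0 \<le> det (binomial_minor d m p s :: int mat) \<and>
    ((\<forall>r<m. s r \<le> p r \<and> p r \<le> s r + d) \<longrightarrow> 0 < det (binomial_minor d m p s :: int mat))"
  using assms(1)
proof (induction d arbitrary: p)
  case 0
  show ?case
  proof (cases "\<forall>r<m. p r = s r")
    case True
    then show ?thesis by (simp add: binomial_minor_0_diagonal[OF s])
  next
    case False
    then have "det (binomial_minor 0 m p s :: int mat) = 0"
      using det_binomial_minor_0_off_diagonal[OF "0.prems" s] by blast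
    moreover have "\<not> (\<forall>r<m. s r \<le> p r \<and> p r \<le> s r + 0)"
      using False by force
    ultimately show ?thesis by simp
  qed
next
  case (Suc d)
  have nonneg: "0 \<le> det (pascal_term d m p s R :: int mat)" for R
    using Suc.IH by (intro det_pascal_term_nonneg[OF _ Suc.prems]) blast
  have "0 < det (binomial_minor (Suc d) m p s :: int mat)"
    if bounds: "\<forall>r<m. s r \<le> p r \<and> p r \<le> s r + Suc d"
  proof -
    define R where "R = {r \<in> {0..<m}. p r = s r}"
    define q where "q r = (if r \<in> R then p r else p r - 1)" for r
    have "strict_mono_on {..<m} q"
    proof (rule strict_mono_onI)
      fix i j assume "i \<in> {..<m}" "j \<in> {..<m}" "i < j"
      then show "q i < q j"
        using strict_mono_onD[OF Suc.prems, of i j] strict_mono_onD[OF s, of i j] bounds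
        unfolding q_def R_def by force
    qed
    moreover have "\<forall>r<m. s r \<le> q r \<and> q r \<le> s r + d"
      using bounds by (force simp: q_def R_def)
    moreover have "pascal_term d m p s R = (binomial_minor d m q s :: int mat)"
      using bounds by (intro eq_matI) (auto simp: pascal_term_def binomial_minor_def q_def R_def)
    ultimately have "0 < det (pascal_term d m p s R :: int mat)"
      using Suc.IH by simp
    then show ?thesis
      unfolding det_binomial_minor_Suc using nonneg by (intro sum_pos2[of _ R]) (auto simp: R_def)
  qed
  then show ?case
    using nonneg by (simp add: det_binomial_minor_Suc sum_nonneg)
qed

lemma binomial_minor_invertible:
  assumes "strict_mono_on {..<m} p" and "strict_mono_on {..<m} s"
    and "\<forall>r<m. s r \<le> p r \<and> p r \<le> s r + d"
  obtains B :: "'k::field_char_0 mat"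
  where "B \<in> carrier_mat m m" and "B * binomial_minor d m p s = 1\<^sub>m m" and "binomial_minor d m p s * B = 1\<^sub>m m"
proof -
  have "binomial_minor d m p s = map_mat of_int (binomial_minor d m p s :: int mat)"
    by (intro eq_matI) (auto simp: binomial_minor_def)
  then have "det (binomial_minor d m p s :: 'k mat) = of_int (det (binomial_minor d m p s :: int mat))"
    by (metis of_int_hom.hom_det)
  also have "\<dots> \<noteq> 0"
    using det_binomial_minor_nonneg_pos[OF assms(1,2), of d] assms(3) by (metis of_int_eq_0_iff less_irrefl)
  finally have "binomial_minor d m p s \<in> Units (ring_mat TYPE('k) m ())"
    by (intro det_non_zero_imp_unit) (simp add: binomial_minor_def)
  with that show ?thesis
    unfolding Units_def ring_mat_def by auto
qed

lemma binomial_minor_mult_vec: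
  "r < m \<Longrightarrow> (binomial_minor d m p s *\<^sub>v vec m g) $ r = (\<Sum>c<m. of_nat (binomial_entry d (p r) (s c)) * g c)"
  by (simp add: binomial_minor_def mult_mat_vec_def scalar_prod_def lessThan_atLeast0)

lemma binomial_system_unique:
  fixes p s :: "nat \<Rightarrow> nat" and g :: "nat \<Rightarrow> 'k::field_char_0"
  assumes "strict_mono_on {..<m} p" and "strict_mono_on {..<m} s"
    and "\<forall>r<m. s r \<le> p r \<and> p r \<le> s r + d"
    and "\<forall>r<m. (\<Sum>c<m. of_nat (binomial_entry d (p r) (s c)) * g c) = 0"
  shows "\<forall>c<m. g c = 0"
proof -
  obtain B :: "'k mat" where B: "B \<in> carrier_mat m m" "B * binomial_minor d m p s = 1\<^sub>m m"
    using binomial_minor_invertible[OF assms(1-3)] by blast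
  have "binomial_minor d m p s *\<^sub>v vec m g = 0\<^sub>v m"
    using assms(4) by (intro eq_vecI) (simp_all add: binomial_minor_mult_vec, simp add: binomial_minor_def)
  then have "vec m g = B *\<^sub>v 0\<^sub>v m"
    using B by (metis assoc_mult_mat_vec binomial_minor_def mat_carrier one_mult_mat_vec vec_carrier)
  also have "\<dots> = 0\<^sub>v m"
    using B(1) by (intro eq_vecI) auto
  finally show ?thesis
    by (metis index_vec index_zero_vec(1))
qed

lemma binomial_system_solvable:
  fixes p s :: "nat \<Rightarrow> nat"
  assumes "strict_mono_on {..<m} p" and "strict_mono_on {..<m} s"
    and "\<forall>r<m. s r \<le> p r \<and> p r \<le> s r + d"
  shows "\<exists>g. \<forall>r<m. (\<Sum>c<m. of_nat (binomial_entry d (p r) (s c)) * g c) = (w r :: 'k::field_char_0)"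
proof -
  obtain B :: "'k mat" where B: "B \<in> carrier_mat m m" "binomial_minor d m p s * B = 1\<^sub>m m"
    using binomial_minor_invertible[OF assms] by blast
  define u where "u = B *\<^sub>v vec m w"
  have "vec m (\<lambda>c. u $ c) = u"
    using B(1) by (auto simp: u_def)
  have "binomial_minor d m p s *\<^sub>v u = (binomial_minor d m p s * B) *\<^sub>v vec m w"
    unfolding u_def using B(1) by (intro assoc_mult_mat_vec[symmetric]) (auto simp: binomial_minor_def)
  also have "\<dots> = vec m w"
    using B(2) by simp
  finally have "binomial_minor d m p s *\<^sub>v u = vec m w" .
  then have "\<forall>r<m. (\<Sum>c<m. of_nat (binomial_entry d (p r) (s c)) * u $ c) = w r"
    using binomial_minor_mult_vec[of _ m d p s "\<lambda>c. u $ c"] \<open>vec m (\<lambda>c. u $ c) = u\<close> by (metis index_vec)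
  then show ?thesis by blast
qed

lemma binomial_system_unique_on:
  fixes v :: "nat \<Rightarrow> 'k::field_char_0"
  assumes "finite X" and \<phi>: "strict_mono_on X \<phi>" and "\<forall>x\<in>X. x \<le> \<phi> x \<and> \<phi> x \<le> x + d"
    and "\<forall>x\<in>X. (\<Sum>x'\<in>X. of_nat (binomial_entry d (\<phi> x) x') * v x') = 0"
  shows "\<forall>x\<in>X. v x = 0"
proof -
  obtain s where s_bij: "bij_betw s {..<card X} X" and s: "strict_mono_on {..<card X} s"
    using ex_bij_betw_strict_mono_card[OF assms(1)] by blast
  have s_in: "s c \<in> X" if "c < card X" for c
    using bij_betw_apply[OF s_bij] that by simp
  have reindex: "(\<Sum>x'\<in>X. F x') = (\<Sum>c<card X. F (s c))" for F :: "nat \<Rightarrow> 'k"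
    by (rule sum.reindex_bij_betw[OF s_bij, symmetric])
  have "strict_mono_on {..<card X} (\<phi> \<circ> s)"
    by (rule strict_mono_onI) (auto intro!: strict_mono_onD[OF \<phi>] strict_mono_onD[OF s] s_in)
  moreover have "\<forall>c<card X. s c \<le> (\<phi> \<circ> s) c \<and> (\<phi> \<circ> s) c \<le> s c + d"
    using assms(3) s_in by simp
  moreover have "\<forall>r<card X. (\<Sum>c<card X. of_nat (binomial_entry d ((\<phi> \<circ> s) r) (s c)) * v (s c)) = 0"
  proof (intro allI impI)
    fix r assume "r < card X"
    then show "(\<Sum>c<card X. of_nat (binomial_entry d ((\<phi> \<circ> s) r) (s c)) * v (s c)) = 0"
      using assms(4) s_in reindex[of "\<lambda>x'. of_nat (binomial_entry d (\<phi> (s r)) x') * v x'"] by simp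
  qed
  ultimately have "\<forall>c<card X. v (s c) = 0"
    by (rule binomial_system_unique[OF _ s])
  then show ?thesis
    using bij_betw_imp_surj_on[OF s_bij] by (metis imageE lessThan_iff)
qed

lemma binomial_system_solvable_on:
  assumes "finite Y" and \<psi>: "strict_mono_on Y \<psi>" and "\<forall>y\<in>Y. \<psi> y \<le> y \<and> y \<le> \<psi> y + d"
  shows "\<exists>v. \<forall>y\<in>Y. (\<Sum>x\<in>\<psi> ` Y. of_nat (binomial_entry d y x) * v x) = (w y :: 'k::field_char_0)"
proof -
  obtain p where p_bij: "bij_betw p {..<card Y} Y" and p: "strict_mono_on {..<card Y} p"
    using ex_bij_betw_strict_mono_card[OF assms(1)] by blast
  have p_in: "p r \<in> Y" if "r < card Y" for r
    using bij_betw_apply[OF p_bij] that by simp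
  have "strict_mono_on {..<card Y} (\<psi> \<circ> p)"
    by (rule strict_mono_onI) (auto intro!: strict_mono_onD[OF \<psi>] strict_mono_onD[OF p] p_in)
  moreover have "\<forall>r<card Y. (\<psi> \<circ> p) r \<le> p r \<and> p r \<le> (\<psi> \<circ> p) r + d"
    using assms(3) p_in by simp
  ultimately obtain g where g:
    "\<forall>r<card Y. (\<Sum>c<card Y. of_nat (binomial_entry d (p r) ((\<psi> \<circ> p) c)) * g c) = w (p r)"
    using binomial_system_solvable[OF p, where w = "\<lambda>r. w (p r)"] by blast
  have \<psi>p_bij: "bij_betw (\<psi> \<circ> p) {..<card Y} (\<psi> ` Y)"
    by (rule bij_betw_trans[OF p_bij]) (simp add: bij_betw_def strict_mono_on_imp_inj_on[OF \<psi>])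
  define v where "v x = g (inv_into {..<card Y} (\<psi> \<circ> p) x)" for x
  have v: "v (\<psi> (p c)) = g c" if "c < card Y" for c
    using bij_betw_inv_into_left[OF \<psi>p_bij, of c] that by (simp add: v_def)
  have reindex: "(\<Sum>x\<in>\<psi> ` Y. F x * v x) = (\<Sum>c<card Y. F (\<psi> (p c)) * g c)" for F :: "nat \<Rightarrow> 'k"
  proof -
    have "(\<Sum>x\<in>\<psi> ` Y. F x * v x) = (\<Sum>c<card Y. F ((\<psi> \<circ> p) c) * v ((\<psi> \<circ> p) c))"
      by (rule sum.reindex_bij_betw[OF \<psi>p_bij, symmetric])
    also have "\<dots> = (\<Sum>c<card Y. F (\<psi> (p c)) * g c)"
      by (intro sum.cong refl) (simp add: v)
    finally show ?thesis .
  qed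
  have "(\<Sum>x\<in>\<psi> ` Y. of_nat (binomial_entry d y x) * v x) = w y" if y: "y \<in> Y" for y
  proof -
    obtain r where "r < card Y" and "y = p r"
      using y bij_betw_imp_surj_on[OF p_bij] by (metis imageE lessThan_iff)
    then show ?thesis
      using g reindex by simp
  qed
  then show ?thesis by blast
qed

lemma lef_inj_of_matching:
  fixes \<phi> :: "nat \<Rightarrow> nat" and \<alpha> \<beta> a b n d :: nat
  defines "X \<equiv> basis_exps \<alpha> \<beta> a b n" and "Y \<equiv> basis_exps \<alpha> \<beta> a b (n + d)"
  assumes "strict_mono_on X \<phi>" and "\<phi> ` X \<subseteq> Y" and "\<forall>x\<in>X. x \<le> \<phi> x \<and> \<phi> x \<le> x + d"
  shows "lef_inj (xy_ideal \<alpha> \<beta>) (xy_ideal a b :: 'k::field_char_0 poly poly set) (var_x + var_y) d n"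
  unfolding lef_inj_def
proof (intro ballI impI)
  fix f :: "'k poly poly"
  assume f: "f \<in> xy_ideal \<alpha> \<beta>" "homog n f" and "(var_x + var_y) ^ d * f \<in> xy_ideal a b"
  then have "\<forall>y\<in>Y. coeff_xy ((var_x + var_y) ^ d * f) y (n + d - y) = 0"
    unfolding Y_def
    using homog_mem_xy_ideal_iff[OF homog_lin_power_mult ideal2_mult_left] by blast
  then have "\<forall>x\<in>X. (\<Sum>x'\<in>X. of_nat (binomial_entry d (\<phi> x) x') * coeff_xy f x' (n - x')) = 0"
    using assms(4) coeff_xy_lin_power_mult_basis[OF f(2,1)] unfolding X_def Y_def by auto
  then have "\<forall>x\<in>X. coeff_xy f x (n - x) = 0"
    using binomial_system_unique_on[OF _ assms(3,5)] by (simp add: X_def finite_basis_exps)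
  then show "f \<in> xy_ideal a b"
    using homog_mem_xy_ideal_iff[OF f(2,1)] by (simp add: X_def)
qed

lemma lef_surj_of_matching:
  fixes \<psi> :: "nat \<Rightarrow> nat" and \<alpha> \<beta> a b n d :: nat
  defines "X \<equiv> basis_exps \<alpha> \<beta> a b n" and "Y \<equiv> basis_exps \<alpha> \<beta> a b (n + d)"
  assumes "strict_mono_on Y \<psi>" and "\<psi> ` Y \<subseteq> X" and "\<forall>y\<in>Y. \<psi> y \<le> y \<and> y \<le> \<psi> y + d"
  shows "lef_surj (xy_ideal \<alpha> \<beta>) (xy_ideal a b :: 'k::field_char_0 poly poly set) (var_x + var_y) d n"
  unfolding lef_surj_def
proof (intro ballI impI)
  fix g :: "'k poly poly"
  assume g: "g \<in> xy_ideal \<alpha> \<beta>" "homog (n + d) g"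
  obtain v where v: "\<forall>y\<in>Y. (\<Sum>x\<in>\<psi> ` Y. of_nat (binomial_entry d y x) * v x) = coeff_xy g y (n + d - y)"
    using binomial_system_solvable_on[OF _ assms(3,5), where w = "\<lambda>y. coeff_xy g y (n + d - y)"]
    by (auto simp: Y_def finite_basis_exps)
  define f where "f = (\<Sum>x\<in>\<psi> ` Y. monom (monom (v x) x) (n - x))"
  have X_le: "x \<le> n" and X_in_ideal: "\<alpha> \<le> x \<or> \<beta> \<le> n - x" if "x \<in> X" for x
    using that by (auto simp: X_def basis_exps_def)
  have coeff_f: "coeff_xy f x (n - x) = (if x \<in> \<psi> ` Y then v x else 0)" for x
  proof -
    have "coeff_xy f x (n - x) = (\<Sum>x'\<in>\<psi> ` Y. if x' = x then v x' else 0)"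
      unfolding f_def coeff_xy_sum by (intro sum.cong refl) auto
    then show ?thesis
      by (simp add: Y_def finite_basis_exps)
  qed
  have f_homog: "homog n f"
    unfolding f_def using assms(4) X_le by (intro homog_sum homog_monom) auto
  have f_ideal: "f \<in> xy_ideal \<alpha> \<beta>"
    unfolding f_def using assms(4) X_in_ideal by (intro ideal2_sum) (auto simp: mem_xy_ideal_iff)
  have "coeff_xy (g - (var_x + var_y) ^ d * f) y (n + d - y) = 0" if "y \<in> Y" for y
  proof -
    have "coeff_xy ((var_x + var_y) ^ d * f) y (n + d - y)
        = (\<Sum>x\<in>X. of_nat (binomial_entry d y x) * (if x \<in> \<psi> ` Y then v x else 0))"
      using coeff_xy_lin_power_mult_basis[OF f_homog f_ideal, of y a b d] that X_le coeff_f
      by (simp add: X_def Y_def)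
    also have "\<dots> = (\<Sum>x\<in>\<psi> ` Y. of_nat (binomial_entry d y x) * v x)"
      using assms(4) by (simp add: if_distrib sum.If_cases X_def finite_basis_exps Int_absorb1)
    finally show ?thesis
      using v that by simp
  qed
  then have "g - (var_x + var_y) ^ d * f \<in> xy_ideal a b"
    using homog_mem_xy_ideal_iff[OF homog_diff[OF g(2) homog_lin_power_mult[OF f_homog]]
        ideal2_diff[OF g(1) ideal2_mult_left[OF f_ideal]]]
    by (simp add: Y_def)
  then show "\<exists>f\<in>xy_ideal \<alpha> \<beta>. homog n f \<and> g - (var_x + var_y) ^ d * f \<in> xy_ideal a b"
    using f_ideal f_homog by blast
qed

theorem corollary3p2:
  fixes a b \<alpha> \<beta> :: nat
  assumes "0 < a" and "0 < b" and "\<alpha> \<le> a" and "\<beta> \<le> b"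
  shows "quot_has_SLP
           (ideal2 ((var_x :: 'k::field_char_0 poly poly) ^ \<alpha>) (var_y ^ \<beta>))
           (ideal2 ((var_x :: 'k poly poly) ^ a) (var_y ^ b))"
proof -
  have "lef_inj (xy_ideal \<alpha> \<beta>) (xy_ideal a b :: 'k poly poly set) (var_x + var_y) d n
      \<or> lef_surj (xy_ideal \<alpha> \<beta>) (xy_ideal a b :: 'k poly poly set) (var_x + var_y) d n" for d n
    using basis_exps_matching[where \<alpha> = \<alpha> and \<beta> = \<beta> and a = a and b = b and n = n and d = d]
      lef_inj_of_matching[where \<alpha> = \<alpha> and \<beta> = \<beta> and a = a and b = b and n = n and d = d]
      lef_surj_of_matching[where \<alpha> = \<alpha> and \<beta> = \<beta> and a = a and b = b and n = n and d = d]
    by blast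
  moreover have "homog 1 (var_x + var_y :: 'k poly poly)"
    using homog_lin_power[of 1] by simp
  ultimately show ?thesis
    unfolding quot_has_SLP_def by blast
qed

end
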